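(* Consider the affine control system $\dot x=Ax+a+Bu$ on $\mathbb R^n$ with piecewise continuous controls. Let $\Omega$ and $\Omega_f$ be closed sets with $\Omega\cap\Omega_f\ne\emptyset$. Then $\Omega\xrightarrow{\Omega}\Omega_f$ if and only if no $\Omega$-invariant set is contained in $\Omega\setminus\Omega_f$.
   Context: $\phi^u_t(x_0)$ denotes the solution from $x_0$ under the piecewise continuous control $u:t\mapsto u(t)$. For $x\in\Omega$, $x\xrightarrow{\Omega}\Omega_f$ means there exist a piecewise continuous control $u$ and $T\ge0$ with $\phi^u_T(x)\in\Omega_f$ and $\phi^u_t(x)\in\Omega$ for all $t\in[0,T]$; $\Omega\xrightarrow{\Omega}\Omega_f$ means this holds for every $x\in\Omega$. A set $\mathcal A\subseteq\Omega$ is $\Omega$-invariant if for every $x_0\in\mathcal A$ and every piecewise continuous $u$, every trajectory $\phi^u_t(x_0)$ that lies in $\Omega$ on an interval $[0,T]$ ($T<\infty$) or $[0,\infty)$ lies in $\mathcal A$ on the same interval. (The empty set is not counted as an $\Omega$-invariant set in $\Omega\setminus\Omega_f$ in this statement, i.e. the claim concerns nonempty sets.) *)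

theory Defs
  imports "HOL-Analysis.Analysis"
begin

definition piecewise_continuous :: "(real \<Rightarrow> 'b::topological_space) \<Rightarrow> bool" where
  "piecewise_continuous u \<longleftrightarrow>
     (\<forall>T\<ge>0. \<exists>S. finite S \<and> continuous_on ({0..T} - S) u \<and>
        (\<forall>s\<in>S. (\<exists>l. (u \<longlongrightarrow> l) (at_right s)) \<and>
                 (s > 0 \<longrightarrow> (\<exists>l. (u \<longlongrightarrow> l) (at_left s)))))"

definition is_solution ::
  "real^'n^'n \<Rightarrow> real^'n \<Rightarrow> real^'m^'n \<Rightarrow> (real \<Rightarrow> real^'m) \<Rightarrow> real^'n \<Rightarrow> (real \<Rightarrow> real^'n) \<Rightarrow> bool" where
  "is_solution A a B u x0 x \<longleftrightarrow>
     x 0 = x0 \<and>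
     (\<forall>t\<ge>0. ((\<lambda>s. A *v x s + a + B *v u s) has_integral (x t - x0)) {0..t})"

definition reaches_within ::
  "real^'n^'n \<Rightarrow> real^'n \<Rightarrow> real^'m^'n \<Rightarrow> (real^'n) set \<Rightarrow> (real^'n) set \<Rightarrow> real^'n \<Rightarrow> bool" where
  "reaches_within A a B \<Omega> \<Omega>f x0 \<longleftrightarrow>
     (\<exists>(u :: real \<Rightarrow> real^'m) x T. piecewise_continuous u \<and> is_solution A a B u x0 x \<and> T \<ge> 0 \<and>
        x T \<in> \<Omega>f \<and> (\<forall>t\<in>{0..T}. x t \<in> \<Omega>))"

definition set_reaches_within ::
  "real^'n^'n \<Rightarrow> real^'n \<Rightarrow> real^'m^'n \<Rightarrow> (real^'n) set \<Rightarrow> (real^'n) set \<Rightarrow> bool" where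
  "set_reaches_within A a B \<Omega> \<Omega>f \<longleftrightarrow> (\<forall>x0\<in>\<Omega>. reaches_within A a B \<Omega> \<Omega>f x0)"

definition Omega_invariant ::
  "real^'n^'n \<Rightarrow> real^'n \<Rightarrow> real^'m^'n \<Rightarrow> (real^'n) set \<Rightarrow> (real^'n) set \<Rightarrow> bool" where
  "Omega_invariant A a B \<Omega> S \<longleftrightarrow> S \<subseteq> \<Omega> \<and>
     (\<forall>x0\<in>S. \<forall>(u :: real \<Rightarrow> real^'m) x. piecewise_continuous u \<and> is_solution A a B u x0 x \<longrightarrow>
        (\<forall>T\<ge>0. (\<forall>t\<in>{0..T}. x t \<in> \<Omega>) \<longrightarrow> (\<forall>t\<in>{0..T}. x t \<in> S)) \<and>
        ((\<forall>t\<ge>0. x t \<in> \<Omega>) \<longrightarrow> (\<forall>t\<ge>0. x t \<in> S)))"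

end

theory Submission
  imports Defs
begin

text \<open>If every point of \<open>\<Omega>\<close> reaches \<open>\<Omega>f\<close> within \<open>\<Omega>\<close>, a trajectory from a point of a
  nonempty \<open>\<Omega>\<close>-invariant set \<open>S \<subseteq> \<Omega> - \<Omega>f\<close> that stays in \<open>\<Omega>\<close> until it hits \<open>\<Omega>f\<close> would
  never leave \<open>S\<close>, which is absurd. Conversely, the set \<open>U\<close> of points of \<open>\<Omega>\<close> that cannot reach
  \<open>\<Omega>f\<close> within \<open>\<Omega>\<close> is \<open>\<Omega>\<close>-invariant: if a point \<open>x t\<close> on a trajectory from \<open>y0 \<in> U\<close> that
  stays in \<open>\<Omega>\<close> could reach \<open>\<Omega>f\<close>, concatenating the two controls (piecewise continuity and
  the integral equation survive concatenation) would let \<open>y0\<close> reach \<open>\<Omega>f\<close>. Moreover \<open>U\<close>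
  avoids \<open>\<Omega>f\<close>, since a point of \<open>\<Omega> \<inter> \<Omega>f\<close> reaches \<open>\<Omega>f\<close> at time \<open>0\<close> along any solution,
  and a solution always exists (for the zero control it is a power series). So \<open>U\<close> is empty.\<close>

lemma at_right_le_at_within:
  fixes s :: real
  assumes "s < c" and "{s<..<c} \<subseteq> X"
  shows "at_right s \<le> at s within X"
proof (rule filter_leI)
  fix P assume "eventually P (at s within X)"
  then obtain d where "d > 0" and P: "\<And>y. y \<in> X \<Longrightarrow> y \<noteq> s \<Longrightarrow> dist y s < d \<Longrightarrow> P y"
    unfolding eventually_at by auto
  show "eventually P (at_right s)"
    unfolding eventually_at_right_field
    by (rule exI[of _ "min c (s + d)"]) (use assms \<open>d > 0\<close> P in \<open>auto simp: dist_real_def\<close>)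
qed

lemma at_left_le_at_within:
  fixes s :: real
  assumes "c < s" and "{c<..<s} \<subseteq> X"
  shows "at_left s \<le> at s within X"
proof (rule filter_leI)
  fix P assume "eventually P (at s within X)"
  then obtain d where "d > 0" and P: "\<And>y. y \<in> X \<Longrightarrow> y \<noteq> s \<Longrightarrow> dist y s < d \<Longrightarrow> P y"
    unfolding eventually_at by auto
  show "eventually P (at_left s)"
    unfolding eventually_at_left_field
    by (rule exI[of _ "max c (s - d)"]) (use assms \<open>d > 0\<close> P in \<open>auto simp: dist_real_def\<close>)
qed

lemma tendsto_at_right_if_continuous_on_diff_finite:
  fixes u :: "real \<Rightarrow> 'a::topological_space"
  assumes cont: "continuous_on ({a..b} - S) u" and "finite S"
    and "a \<le> s" "s < b" "s \<notin> S"
  shows "(u \<longlongrightarrow> u s) (at_right s)"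
proof -
  obtain d where "d > 0" and d: "\<forall>x\<in>S. x \<noteq> s \<longrightarrow> d \<le> dist s x"
    using finite_set_avoid[OF \<open>finite S\<close>] by blast
  have "{s<..<min b (s + d)} \<subseteq> {a..b} - S"
    using assms d by (force simp: dist_real_def)
  then have "at_right s \<le> at s within ({a..b} - S)"
    by (rule at_right_le_at_within[rotated]) (use \<open>s < b\<close> \<open>d > 0\<close> in simp)
  moreover have "(u \<longlongrightarrow> u s) (at s within ({a..b} - S))"
    using cont assms unfolding continuous_on_def by auto
  ultimately show ?thesis
    using tendsto_mono by blast
qed

lemma tendsto_at_left_if_continuous_on_diff_finite:
  fixes u :: "real \<Rightarrow> 'a::topological_space"
  assumes cont: "continuous_on ({a..b} - S) u" and "finite S"
    and "a < s" "s \<le> b" "s \<notin> S"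
  shows "(u \<longlongrightarrow> u s) (at_left s)"
proof -
  obtain d where "d > 0" and d: "\<forall>x\<in>S. x \<noteq> s \<longrightarrow> d \<le> dist s x"
    using finite_set_avoid[OF \<open>finite S\<close>] by blast
  have "{max a (s - d)<..<s} \<subseteq> {a..b} - S"
    using assms d by (force simp: dist_real_def)
  then have "at_left s \<le> at s within ({a..b} - S)"
    by (rule at_left_le_at_within[rotated]) (use \<open>a < s\<close> \<open>d > 0\<close> in simp)
  moreover have "(u \<longlongrightarrow> u s) (at s within ({a..b} - S))"
    using cont assms unfolding continuous_on_def by auto
  ultimately show ?thesis
    using tendsto_mono by blast
qed

lemma piecewise_continuous_right_limit:
  assumes "piecewise_continuous u" and "s \<ge> 0"
  shows "\<exists>l. (u \<longlongrightarrow> l) (at_right s)"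
proof -
  obtain S where S: "finite S" "continuous_on ({0..s + 1} - S) u"
    "\<forall>x\<in>S. \<exists>l. (u \<longlongrightarrow> l) (at_right x)"
    using assms unfolding piecewise_continuous_def by (meson add_nonneg_nonneg zero_le_one)
  show ?thesis
    using S tendsto_at_right_if_continuous_on_diff_finite[OF S(2,1), of s] \<open>s \<ge> 0\<close>
    by (cases "s \<in> S") auto
qed

lemma piecewise_continuous_left_limit:
  assumes "piecewise_continuous u" and "s > 0"
  shows "\<exists>l. (u \<longlongrightarrow> l) (at_left s)"
proof -
  obtain S where S: "finite S" "continuous_on ({0..s} - S) u"
    "\<forall>x\<in>S. x > 0 \<longrightarrow> (\<exists>l. (u \<longlongrightarrow> l) (at_left x))"
    using assms unfolding piecewise_continuous_def by (meson less_imp_le)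
  show ?thesis
    using S tendsto_at_left_if_continuous_on_diff_finite[OF S(2,1), of s] \<open>s > 0\<close>
    by (cases "s \<in> S") auto
qed

text \<open>The definition asks for one-sided limits only at the exceptional points, but they exist
  everywhere; this form is stable under shifting and concatenation.\<close>
lemma piecewise_continuous_iff:
  "piecewise_continuous u \<longleftrightarrow>
     (\<forall>T\<ge>0. \<exists>S. finite S \<and> continuous_on ({0..T} - S) u) \<and>
     (\<forall>s\<ge>0. \<exists>l. (u \<longlongrightarrow> l) (at_right s)) \<and>
     (\<forall>s>0. \<exists>l. (u \<longlongrightarrow> l) (at_left s))"
  (is "_ \<longleftrightarrow> ?cont \<and> ?right \<and> ?left")
proof
  assume pc: "piecewise_continuous u"
  then have ?cont
    unfolding piecewise_continuous_def by meson
  with pc show "?cont \<and> ?right \<and> ?left"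
    using piecewise_continuous_right_limit piecewise_continuous_left_limit by blast
next
  assume lims: "?cont \<and> ?right \<and> ?left"
  show "piecewise_continuous u"
    unfolding piecewise_continuous_def
  proof (intro allI impI)
    fix T :: real assume "T \<ge> 0"
    with lims obtain S where "finite S" "continuous_on ({0..T} - S) u" by blast
    moreover have "{0..T} - S = {0..T} - (S \<inter> {0..T})" by blast
    ultimately show "\<exists>S. finite S \<and> continuous_on ({0..T} - S) u \<and>
        (\<forall>s\<in>S. (\<exists>l. (u \<longlongrightarrow> l) (at_right s)) \<and> (s > 0 \<longrightarrow> (\<exists>l. (u \<longlongrightarrow> l) (at_left s))))"
      using lims by (intro exI[of _ "S \<inter> {0..T}"]) auto
  qed
qed

lemma piecewise_continuous_const: "piecewise_continuous (\<lambda>_. c)"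
  unfolding piecewise_continuous_def by (auto intro!: exI[of _ "{}"])

lemma tendsto_at_right_shift:
  fixes s t :: real
  assumes "(v \<longlongrightarrow> l) (at_right (s - t))"
  shows "((\<lambda>x. v (x - t)) \<longlongrightarrow> l) (at_right s)"
proof -
  have "filterlim (\<lambda>x. x - t) (at_right (s - t)) (at_right s)"
    by (rule tendsto_imp_filterlim_at_right)
      (auto intro!: tendsto_eq_intros simp: eventually_at_filter)
  from filterlim_compose[OF assms this] show ?thesis .
qed

lemma tendsto_at_left_shift:
  fixes s t :: real
  assumes "(v \<longlongrightarrow> l) (at_left (s - t))"
  shows "((\<lambda>x. v (x - t)) \<longlongrightarrow> l) (at_left s)"
proof -
  have "filterlim (\<lambda>x. x - t) (at_left (s - t)) (at_left s)"
    by (rule tendsto_imp_filterlim_at_left)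
      (auto intro!: tendsto_eq_intros simp: eventually_at_filter)
  from filterlim_compose[OF assms this] show ?thesis .
qed

definition concat_at :: "real \<Rightarrow> (real \<Rightarrow> 'a) \<Rightarrow> (real \<Rightarrow> 'a) \<Rightarrow> real \<Rightarrow> 'a" where
  "concat_at t f g s = (if s \<le> t then f s else g (s - t))"

lemma continuous_on_concat_at:
  assumes f: "continuous_on ({0..T} - S) f" and g: "continuous_on ({0..T} - S') g" and "t \<ge> 0"
  shows "continuous_on ({0..T} - (S \<union> {t} \<union> (\<lambda>s. s + t) ` S')) (concat_at t f g)"
proof -
  let ?X = "{0..T} - (S \<union> {t} \<union> (\<lambda>s. s + t) ` S')"
  have X: "?X = ?X \<inter> {..<t} \<union> ?X \<inter> {t<..}" by auto
  have "continuous_on (?X \<inter> {..<t}) f"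
    by (rule continuous_on_subset[OF f]) auto
  moreover have "continuous_on (?X \<inter> {t<..}) (\<lambda>s. g (s - t))"
  proof (rule continuous_on_compose2[OF g])
    show "(\<lambda>s. s - t) ` (?X \<inter> {t<..}) \<subseteq> {0..T} - S'"
      using \<open>t \<ge> 0\<close> by (auto simp: image_iff) (metis diff_add_cancel)
  qed (intro continuous_intros)
  ultimately have "continuous_on (?X \<inter> {..<t} \<union> ?X \<inter> {t<..}) (concat_at t f g)"
    unfolding concat_at_def
  proof (intro continuous_on_cases_local_open)
    show "openin (top_of_set (?X \<inter> {..<t} \<union> ?X \<inter> {t<..})) (?X \<inter> {..<t})"
      by (subst openin_open) (rule exI[of _ "{..<t}"], auto)
    show "openin (top_of_set (?X \<inter> {..<t} \<union> ?X \<inter> {t<..})) (?X \<inter> {t<..})"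
      by (subst openin_open) (rule exI[of _ "{t<..}"], auto)
  qed auto
  with X show ?thesis by simp
qed

lemma piecewise_continuous_concat_at:
  assumes u: "piecewise_continuous u" and v: "piecewise_continuous v" and "t \<ge> 0"
  shows "piecewise_continuous (concat_at t u v)"
  unfolding piecewise_continuous_iff
proof (intro conjI allI impI)
  fix T :: real assume "T \<ge> 0"
  obtain S where "finite S" and S: "continuous_on ({0..T} - S) u"
    using u \<open>T \<ge> 0\<close> unfolding piecewise_continuous_iff by blast
  obtain S' where "finite S'" and S': "continuous_on ({0..T} - S') v"
    using v \<open>T \<ge> 0\<close> unfolding piecewise_continuous_iff by blast
  show "\<exists>S. finite S \<and> continuous_on ({0..T} - S) (concat_at t u v)"
    by (rule exI, rule conjI[OF _ continuous_on_concat_at[OF S S' \<open>t \<ge> 0\<close>]])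
      (use \<open>finite S\<close> \<open>finite S'\<close> in simp)
next
  fix s :: real assume "s \<ge> 0"
  show "\<exists>l. (concat_at t u v \<longlongrightarrow> l) (at_right s)"
  proof (cases "s < t")
    case True
    obtain l where l: "(u \<longlongrightarrow> l) (at_right s)"
      using piecewise_continuous_right_limit[OF u \<open>s \<ge> 0\<close>] by blast
    have "eventually (\<lambda>x. u x = concat_at t u v x) (at_right s)"
      using eventually_at_right_real[OF True] by eventually_elim (simp add: concat_at_def)
    with l show ?thesis
      by (blast intro: Lim_transform_eventually)
  next
    case False
    obtain l where l: "(v \<longlongrightarrow> l) (at_right (s - t))"
      using piecewise_continuous_right_limit[OF v, of "s - t"] False by auto
    have "eventually (\<lambda>x. v (x - t) = concat_at t u v x) (at_right s)"
      using eventually_at_right_less[of s] by eventually_elim (use False in \<open>simp add: concat_at_def\<close>)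
    with tendsto_at_right_shift[OF l] show ?thesis
      by (blast intro: Lim_transform_eventually)
  qed
next
  fix s :: real assume "s > 0"
  show "\<exists>l. (concat_at t u v \<longlongrightarrow> l) (at_left s)"
  proof (cases "s \<le> t")
    case True
    obtain l where l: "(u \<longlongrightarrow> l) (at_left s)"
      using piecewise_continuous_left_limit[OF u \<open>s > 0\<close>] by blast
    have "eventually (\<lambda>x. u x = concat_at t u v x) (at_left s)"
      using eventually_at_left_real[OF \<open>s > 0\<close>] by eventually_elim (use True in \<open>simp add: concat_at_def\<close>)
    with l show ?thesis
      by (blast intro: Lim_transform_eventually)
  next
    case False
    obtain l where l: "(v \<longlongrightarrow> l) (at_left (s - t))"
      using piecewise_continuous_left_limit[OF v, of "s - t"] False by auto
    have "eventually (\<lambda>x. v (x - t) = concat_at t u v x) (at_left s)"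
      using eventually_at_left_real[of t s] False by (auto elim: eventually_mono simp: concat_at_def)
    with tendsto_at_left_shift[OF l] show ?thesis
      by (blast intro: Lim_transform_eventually)
  qed
qed

lemma is_solution_concat_at:
  assumes x: "is_solution A a B u x0 x" and y: "is_solution A a B v (x t) y" and "t \<ge> 0"
  shows "is_solution A a B (concat_at t u v) x0 (concat_at t x y)"
  unfolding is_solution_def
proof (intro conjI allI impI)
  let ?f = "\<lambda>\<sigma>. A *v concat_at t x y \<sigma> + a + B *v concat_at t u v \<sigma>"
  have "x 0 = x0" and x_int: "\<And>s. s \<ge> 0 \<Longrightarrow>
      ((\<lambda>\<sigma>. A *v x \<sigma> + a + B *v u \<sigma>) has_integral (x s - x0)) {0..s}"
    using x unfolding is_solution_def by auto
  have y_int: "\<And>s. s \<ge> 0 \<Longrightarrow> ((\<lambda>\<sigma>. A *v y \<sigma> + a + B *v v \<sigma>) has_integral (y s - x t)) {0..s}"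
    using y unfolding is_solution_def by auto
  show "concat_at t x y 0 = x0"
    using \<open>t \<ge> 0\<close> \<open>x 0 = x0\<close> by (simp add: concat_at_def)
  fix s :: real assume "s \<ge> 0"
  show "(?f has_integral (concat_at t x y s - x0)) {0..s}"
  proof (cases "s \<le> t")
    case True
    have "(?f has_integral (x s - x0)) {0..s}"
      by (rule has_integral_eq[OF _ x_int[OF \<open>s \<ge> 0\<close>]]) (use True in \<open>simp add: concat_at_def\<close>)
    with True show ?thesis by (simp add: concat_at_def)
  next
    case False
    have first: "(?f has_integral (x t - x0)) {0..t}"
      by (rule has_integral_eq[OF _ x_int[OF \<open>t \<ge> 0\<close>]]) (simp add: concat_at_def)
    have "((\<lambda>\<sigma>. A *v y (\<sigma> - t) + a + B *v v (\<sigma> - t)) has_integral (y (s - t) - x t)) {t..s}"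
      using has_integral_affinity'[of _ _ 0 "s - t" 1 "-t"] y_int[of "s - t"] False by simp
    then have second: "(?f has_integral (y (s - t) - x t)) {t..s}"
      by (rule has_integral_spike_finite[of "{t}", rotated 2]) (auto simp: concat_at_def)
    have "(?f has_integral ((x t - x0) + (y (s - t) - x t))) {0..s}"
      by (rule has_integral_combine[OF \<open>t \<ge> 0\<close> _ first second]) (use False in simp)
    with False show ?thesis by (simp add: concat_at_def)
  qed
qed

lemma power_series_has_vector_derivative:
  fixes c :: "nat \<Rightarrow> real^'n"
  assumes f: "\<And>t. (\<lambda>k. t ^ k *\<^sub>R c k) sums f t"
    and f': "(\<lambda>k. t ^ k *\<^sub>R (real (Suc k) *\<^sub>R c (Suc k))) sums f'"
  shows "(f has_vector_derivative f') (at t)"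
proof -
  have component: "((\<lambda>t. f t $ j) has_real_derivative f' $ j) (at t)" for j
  proof -
    let ?c = "\<lambda>k. c k $ j"
    have sums_j: "(\<lambda>k. ?c k * s ^ k) sums (f s $ j)" for s
      using sums_vec_nth[OF f[of s], of j] by (simp add: mult.commute)
    have "((\<lambda>s. \<Sum>k. ?c k * s ^ k) has_real_derivative (\<Sum>k. diffs ?c k * t ^ k)) (at t)"
      by (rule termdiffs_strong_converges_everywhere) (use sums_j in \<open>blast intro: sums_summable\<close>)
    moreover have "(\<lambda>s. \<Sum>k. ?c k * s ^ k) = (\<lambda>s. f s $ j)"
      using sums_j by (simp add: sums_iff)
    moreover have "(\<lambda>k. diffs ?c k * t ^ k) sums f' $ j"
      using sums_vec_nth[OF f', of j] by (simp add: diffs_def ac_simps)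
    ultimately show ?thesis
      by (simp add: sums_iff)
  qed
  have "(f has_derivative (\<lambda>h. h *\<^sub>R f')) (at t)"
  proof (rule has_derivative_componentwise_within[THEN iffD2], intro ballI)
    fix b :: "real^'n" assume "b \<in> Basis"
    then obtain j where b: "b = axis j 1"
      using axis_inverse by blast
    show "((\<lambda>t. f t \<bullet> b) has_derivative (\<lambda>h. h *\<^sub>R f' \<bullet> b)) (at t)"
      using component[of j] unfolding b has_field_derivative_def
      by (simp add: inner_axis mult.commute[of _ "f' $ j"])
  qed
  then show ?thesis
    unfolding has_vector_derivative_def .
qed

text \<open>Taylor coefficients at time \<open>0\<close> of the solution of \<open>x' = A x + a\<close>, \<open>x 0 = x0\<close>.\<close>
fun free_coeff :: "real^'n^'n \<Rightarrow> real^'n \<Rightarrow> real^'n \<Rightarrow> nat \<Rightarrow> real^'n" where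
  "free_coeff A a x0 0 = x0"
| "free_coeff A a x0 (Suc k) =
     (1 / real (Suc k)) *\<^sub>R (A *v free_coeff A a x0 k + (if k = 0 then a else 0))"

lemma norm_free_coeff_le:
  fixes A :: "real^'n^'n"
  assumes "K \<ge> 0" and K: "\<And>v. norm (A *v v) \<le> norm v * K"
  shows "norm (free_coeff A a x0 k) \<le> (norm x0 + norm a) * (K + 1) ^ k / fact k"
proof (induction k)
  case 0
  then show ?case by simp
next
  case (Suc k)
  let ?C = "norm x0 + norm a"
  let ?v = "A *v free_coeff A a x0 k + (if k = 0 then a else 0)"
  have v: "norm ?v \<le> ?C * (K + 1) ^ Suc k / fact k"
  proof (cases "k = 0")
    case True
    have "norm (A *v x0 + a) \<le> norm x0 * K + norm a"
      using K[of x0] norm_triangle_ineq[of "A *v x0" a] by linarith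
    also have "\<dots> \<le> ?C * (K + 1)"
      using \<open>K \<ge> 0\<close> by (simp add: algebra_simps)
    finally show ?thesis using True by simp
  next
    case False
    have "norm (A *v free_coeff A a x0 k) \<le> norm (free_coeff A a x0 k) * K" by (rule K)
    also have "\<dots> \<le> (?C * (K + 1) ^ k / fact k) * K"
      by (rule mult_right_mono[OF Suc.IH \<open>K \<ge> 0\<close>])
    also have "\<dots> \<le> (?C * (K + 1) ^ k / fact k) * (K + 1)"
      using \<open>K \<ge> 0\<close> by (intro mult_left_mono) auto
    finally show ?thesis using False by (simp add: ac_simps)
  qed
  have "norm (free_coeff A a x0 (Suc k)) = norm ?v / real (Suc k)"
    by simp
  also have "\<dots> \<le> (?C * (K + 1) ^ Suc k / fact k) / real (Suc k)"
    by (rule divide_right_mono[OF v]) simp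
  also have "\<dots> = ?C * (K + 1) ^ Suc k / fact (Suc k)"
    by (simp add: field_simps)
  finally show ?case .
qed

lemma summable_free_coeff_series:
  fixes A :: "real^'n^'n"
  shows "summable (\<lambda>k. t ^ k *\<^sub>R free_coeff A a x0 k)"
proof -
  obtain K where "K > 0" and K: "\<And>v. norm (A *v v) \<le> norm v * K"
    using bounded_linear.pos_bounded[OF matrix_vector_mul_bounded_linear[of A]] by blast
  let ?C = "norm x0 + norm a"
  show ?thesis
  proof (rule summable_norm_cancel, rule summable_comparison_test')
    show "summable (\<lambda>k. ?C * (inverse (fact k) * ((K + 1) * \<bar>t\<bar>) ^ k))"
      by (intro summable_mult summable_exp)
    fix k :: nat
    have "norm (norm (t ^ k *\<^sub>R free_coeff A a x0 k)) = \<bar>t\<bar> ^ k * norm (free_coeff A a x0 k)"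
      by (simp add: power_abs)
    also have "\<dots> \<le> \<bar>t\<bar> ^ k * (?C * (K + 1) ^ k / fact k)"
      using norm_free_coeff_le[of K A a x0 k] \<open>K > 0\<close> K by (intro mult_left_mono) auto
    also have "\<dots> = ?C * (inverse (fact k) * ((K + 1) * \<bar>t\<bar>) ^ k)"
      by (simp add: power_mult_distrib divide_inverse ac_simps)
    finally show "norm (norm (t ^ k *\<^sub>R free_coeff A a x0 k)) \<le> \<dots>" .
  qed
qed

lemma free_solution_exists:
  fixes A :: "real^'n^'n" and B :: "real^'m^'n"
  shows "\<exists>x. is_solution A a B (\<lambda>_. 0) x0 x"
proof -
  define c where "c = free_coeff A a x0"
  define x where "x t = (\<Sum>k. t ^ k *\<^sub>R c k)" for t :: real
  have x_sums: "(\<lambda>k. t ^ k *\<^sub>R c k) sums x t" for t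
    unfolding x_def c_def using summable_free_coeff_series by (rule summable_sums)
  have "(\<lambda>k. t ^ k *\<^sub>R (real (Suc k) *\<^sub>R c (Suc k))) sums (A *v x t + a)" for t
  proof -
    have "(\<lambda>k. t ^ k *\<^sub>R (A *v c k)) sums (A *v x t)"
      using bounded_linear.sums[OF matrix_vector_mul_bounded_linear[of A] x_sums[of t]]
      by (simp add: matrix_vector_mult_scaleR)
    moreover have "(\<lambda>k. t ^ k *\<^sub>R (if k = 0 then a else 0)) sums a"
      using sums_single[of 0 "\<lambda>_. a"] by (simp add: if_distrib cong: if_cong)
    ultimately show ?thesis
      using sums_add by (fastforce simp: c_def scaleR_add_right)
  qed
  then have deriv: "(x has_vector_derivative (A *v x t + a)) (at t)" for t
    using power_series_has_vector_derivative[OF x_sums] by blast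
  have "(\<lambda>k. (0::real) ^ k *\<^sub>R c k) = (\<lambda>k. if k = 0 then x0 else 0)"
    by (simp add: c_def fun_eq_iff)
  then have "(\<lambda>k. (0::real) ^ k *\<^sub>R c k) sums x0"
    using sums_single[of 0 "\<lambda>_. x0"] by simp
  with x_sums[of 0] have "x 0 = x0"
    by (rule sums_unique2)
  have "is_solution A a B (\<lambda>_. 0) x0 x"
    unfolding is_solution_def
  proof (intro conjI allI impI)
    fix t :: real assume "t \<ge> 0"
    have "((\<lambda>s. A *v x s + a) has_integral (x t - x 0)) {0..t}"
      by (rule fundamental_theorem_of_calculus[OF \<open>t \<ge> 0\<close>])
        (rule has_vector_derivative_at_within[OF deriv])
    then show "((\<lambda>s. A *v x s + a + B *v 0) has_integral (x t - x0)) {0..t}"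
      using \<open>x 0 = x0\<close> by simp
  qed fact
  then show ?thesis by blast
qed

lemma reaches_within_if_mem:
  fixes B :: "real^'m^'n"
  assumes "x0 \<in> \<Omega>" and "x0 \<in> \<Omega>f"
  shows "reaches_within A a B \<Omega> \<Omega>f x0"
proof -
  obtain x where x: "is_solution A a B (\<lambda>_. 0 :: real^'m) x0 x"
    using free_solution_exists by blast
  then have "x 0 = x0"
    unfolding is_solution_def by simp
  with x assms show ?thesis
    unfolding reaches_within_def
    by (intro exI[of _ "\<lambda>_. 0"] exI[of _ x] exI[of _ 0]) (auto intro: piecewise_continuous_const)
qed

lemma reaches_within_via_trajectory:
  assumes u: "piecewise_continuous u" and x: "is_solution A a B u x0 x"
    and "t \<ge> 0" and in_\<Omega>: "\<forall>s\<in>{0..t}. x s \<in> \<Omega>"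
    and "reaches_within A a B \<Omega> \<Omega>f (x t)"
  shows "reaches_within A a B \<Omega> \<Omega>f x0"
proof -
  obtain v y T where v: "piecewise_continuous v" and y: "is_solution A a B v (x t) y"
    and "T \<ge> 0" "y T \<in> \<Omega>f" and y_in_\<Omega>: "\<forall>s\<in>{0..T}. y s \<in> \<Omega>"
    using assms(5) unfolding reaches_within_def by blast
  have "y 0 = x t"
    using y unfolding is_solution_def by simp
  then have "concat_at t x y (t + T) = y T"
    using \<open>T \<ge> 0\<close> by (auto simp: concat_at_def)
  moreover have "concat_at t x y s \<in> \<Omega>" if "s \<in> {0..t + T}" for s
    using that in_\<Omega> y_in_\<Omega> by (auto simp: concat_at_def)
  ultimately show ?thesis
    unfolding reaches_within_def
    using piecewise_continuous_concat_at[OF u v \<open>t \<ge> 0\<close>] is_solution_concat_at[OF x y \<open>t \<ge> 0\<close>]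
      \<open>t \<ge> 0\<close> \<open>T \<ge> 0\<close> \<open>y T \<in> \<Omega>f\<close>
    by (intro exI[of _ "concat_at t u v"] exI[of _ "concat_at t x y"] exI[of _ "t + T"]) auto
qed

lemma Omega_invariant_unreachable:
  fixes B :: "real^'m^'n"
  shows "Omega_invariant A a B \<Omega> {y \<in> \<Omega>. \<not> reaches_within A a B \<Omega> \<Omega>f y}"
    (is "Omega_invariant A a B \<Omega> ?U")
proof -
  have stays: "x t \<in> ?U"
    if "y0 \<in> ?U" "piecewise_continuous u" "is_solution A a B u y0 x" "t \<ge> 0" "\<forall>s\<in>{0..t}. x s \<in> \<Omega>"
    for y0 u x and t :: real
    using that reaches_within_via_trajectory[of u A a B y0 x t \<Omega> \<Omega>f] by auto
  show ?thesis
    unfolding Omega_invariant_def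
  proof (intro conjI ballI allI impI)
    fix y0 u x and T t :: real
    assume "y0 \<in> ?U" "piecewise_continuous u \<and> is_solution A a B u y0 x"
      and "\<forall>t\<in>{0..T}. x t \<in> \<Omega>" and "t \<in> {0..T}"
    then show "x t \<in> ?U"
      using stays[of y0 u x t] by simp
  next
    fix y0 u x and t :: real
    assume "y0 \<in> ?U" "piecewise_continuous u \<and> is_solution A a B u y0 x"
      and "\<forall>t\<ge>0. x t \<in> \<Omega>" and "t \<ge> 0"
    then show "x t \<in> ?U"
      using stays[of y0 u x t] by simp
  qed (rule Collect_restrict)
qed

lemma not_reaches_within_if_Omega_invariant:
  fixes B :: "real^'m^'n"
  assumes "Omega_invariant A a B \<Omega> S" and "S \<inter> \<Omega>f = {}" and "x0 \<in> S"
  shows "\<not> reaches_within A a B \<Omega> \<Omega>f x0"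
proof
  assume "reaches_within A a B \<Omega> \<Omega>f x0"
  then obtain u :: "real \<Rightarrow> real^'m" and x T where "piecewise_continuous u" "is_solution A a B u x0 x"
    and "T \<ge> 0" "x T \<in> \<Omega>f" "\<forall>t\<in>{0..T}. x t \<in> \<Omega>"
    unfolding reaches_within_def by blast
  with assms(1,3) have "x T \<in> S"
    unfolding Omega_invariant_def by fastforce
  with \<open>x T \<in> \<Omega>f\<close> assms(2) show False
    by blast
qed

theorem proposition1:
  fixes A :: "real^'n^'n" and a :: "real^'n" and B :: "real^'m^'n"
    and \<Omega> \<Omega>f :: "(real^'n) set"
  assumes "closed \<Omega>" and "closed \<Omega>f" and "\<Omega> \<inter> \<Omega>f \<noteq> {}"
  shows "set_reaches_within A a B \<Omega> \<Omega>f \<longleftrightarrow>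
         \<not> (\<exists>S. S \<noteq> {} \<and> S \<subseteq> \<Omega> - \<Omega>f \<and> Omega_invariant A a B \<Omega> S)"
proof
  assume all_reach: "set_reaches_within A a B \<Omega> \<Omega>f"
  show "\<not> (\<exists>S. S \<noteq> {} \<and> S \<subseteq> \<Omega> - \<Omega>f \<and> Omega_invariant A a B \<Omega> S)"
  proof
    assume "\<exists>S. S \<noteq> {} \<and> S \<subseteq> \<Omega> - \<Omega>f \<and> Omega_invariant A a B \<Omega> S"
    then obtain S where "S \<noteq> {}" "S \<subseteq> \<Omega> - \<Omega>f" "Omega_invariant A a B \<Omega> S"
      by blast
    moreover obtain x0 where "x0 \<in> S"
      using \<open>S \<noteq> {}\<close> by blast
    ultimately have "\<not> reaches_within A a B \<Omega> \<Omega>f x0"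
      by (intro not_reaches_within_if_Omega_invariant) auto
    with all_reach \<open>x0 \<in> S\<close> \<open>S \<subseteq> \<Omega> - \<Omega>f\<close> show False
      unfolding set_reaches_within_def by auto
  qed
next
  assume no_invariant: "\<not> (\<exists>S. S \<noteq> {} \<and> S \<subseteq> \<Omega> - \<Omega>f \<and> Omega_invariant A a B \<Omega> S)"
  let ?U = "{y \<in> \<Omega>. \<not> reaches_within A a B \<Omega> \<Omega>f y}"
  have "?U \<subseteq> \<Omega> - \<Omega>f"
    using reaches_within_if_mem[of _ \<Omega> \<Omega>f A a B] by auto
  with no_invariant Omega_invariant_unreachable[of A a B \<Omega> \<Omega>f] have "?U = {}"
    by auto
  then show "set_reaches_within A a B \<Omega> \<Omega>f"
    unfolding set_reaches_within_def by auto
qed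

end
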